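(* Let $F$ be a saturated minimally unsatisfiable clause-set, $v$ a singular variable for $F$, and $F' := \mathrm{DP}_v(F)$. 1. For all literals $x$, $\mathrm{ldeg}_{F'}(x)\le\mathrm{ldeg}_F(x)$. 2. Consequently, if $w\neq v$ is a singular variable for $F$, then $w$ is also singular for $F'$.
   Context: Literals are variables $v$ and complements $\overline{v}$; a clause is a finite set of literals with no complementary pair; a clause-set is a finite set of clauses; $\mathrm{var}(F)$ is the set of variables of $F$; $\mathrm{ldeg}_F(x)$ is the number of clauses of $F$ containing literal $x$. $\mathrm{DP}_v(F) := \{C \in F : v \notin \mathrm{var}(C)\} \cup \{(C \cup D)\setminus\{v,\overline{v}\} : C, D \in F,\ C \cap \overline{D} = \{v\}\}$. A minimally unsatisfiable $F$ is saturated if for every $C \in F$ and every literal $y$ with $\mathrm{var}(y) \in \mathrm{var}(F)\setminus \mathrm{var}(C)$, the clause-set $(F\setminus\{C\})\cup\{C\cup\{y\}\}$ is satisfiable. A variable $v$ is singular for $F$ if $\min(\mathrm{ldeg}_F(v),\mathrm{ldeg}_F(\overline{v}))=1$. *)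

theory Defs
  imports Main
begin

datatype 'v lit = Pos 'v | Neg 'v

fun var_lit :: "'v lit \<Rightarrow> 'v" where
  "var_lit (Pos v) = v" | "var_lit (Neg v) = v"

fun comp :: "'v lit \<Rightarrow> 'v lit" where
  "comp (Pos v) = Neg v" | "comp (Neg v) = Pos v"

fun lit_true :: "('v \<Rightarrow> bool) \<Rightarrow> 'v lit \<Rightarrow> bool" where
  "lit_true \<phi> (Pos v) = \<phi> v" | "lit_true \<phi> (Neg v) = (\<not> \<phi> v)"

definition clause :: "'v lit set \<Rightarrow> bool" where
  "clause C \<longleftrightarrow> finite C \<and> (\<forall>x\<in>C. comp x \<notin> C)"

definition clause_set :: "'v lit set set \<Rightarrow> bool" where
  "clause_set F \<longleftrightarrow> finite F \<and> (\<forall>C\<in>F. clause C)"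

definition vars_cl :: "'v lit set \<Rightarrow> 'v set" where
  "vars_cl C = var_lit ` C"

definition vars :: "'v lit set set \<Rightarrow> 'v set" where
  "vars F = (\<Union>C\<in>F. vars_cl C)"

definition ldeg :: "'v lit set set \<Rightarrow> 'v lit \<Rightarrow> nat" where
  "ldeg F x = card {C \<in> F. x \<in> C}"

definition DP :: "'v \<Rightarrow> 'v lit set set \<Rightarrow> 'v lit set set" where
  "DP v F = {C \<in> F. v \<notin> vars_cl C} \<union>
     {(C \<union> D) - {Pos v, Neg v} | C D. C \<in> F \<and> D \<in> F \<and> C \<inter> comp ` D = {Pos v}}"

definition satisfiable :: "'v lit set set \<Rightarrow> bool" where
  "satisfiable F \<longleftrightarrow> (\<exists>\<phi>. \<forall>C\<in>F. \<exists>x\<in>C. lit_true \<phi> x)"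

definition min_unsat :: "'v lit set set \<Rightarrow> bool" where
  "min_unsat F \<longleftrightarrow> clause_set F \<and> \<not> satisfiable F \<and> (\<forall>C\<in>F. satisfiable (F - {C}))"

definition saturated :: "'v lit set set \<Rightarrow> bool" where
  "saturated F \<longleftrightarrow> min_unsat F \<and>
     (\<forall>C\<in>F. \<forall>y. var_lit y \<in> vars F - vars_cl C \<longrightarrow>
        satisfiable ((F - {C}) \<union> {C \<union> {y}}))"

definition singular :: "'v lit set set \<Rightarrow> 'v \<Rightarrow> bool" where
  "singular F v \<longleftrightarrow> min (ldeg F (Pos v)) (ldeg F (Neg v)) = 1"

end

theory Submission
  imports Defs
begin

text \<open>Let \<open>l\<close> be the literal of the singular variable \<open>v\<close> occurring only in the clause \<open>C0\<close>.
  Saturation forces every clause \<open>D\<close> containing \<open>comp l\<close> to contain \<open>C0 - {l}\<close>, so the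
  resolvent of \<open>C0\<close> and \<open>D\<close> is just \<open>D - {comp l}\<close>. Hence \<open>DP v F\<close> consists of the
  clauses of \<open>F\<close> without \<open>v\<close> and the clauses \<open>D - {comp l}\<close>, each obtained from its own
  clause of \<open>F\<close> by deleting a literal of \<open>v\<close>: literal degrees cannot grow, and a literal of
  another variable occurring in \<open>F\<close> still occurs in \<open>DP v F\<close>, so singularity of \<open>w \<noteq> v\<close>
  is preserved.\<close>

lemma comp_comp [simp]: "comp (comp x) = x"
  by (cases x) auto

lemma var_lit_comp [simp]: "var_lit (comp x) = var_lit x"
  by (cases x) auto

lemma lit_true_comp [simp]: "lit_true \<phi> (comp x) \<longleftrightarrow> \<not> lit_true \<phi> x"
  by (cases x) auto

lemma var_lit_eq_iff: "var_lit y = var_lit x \<longleftrightarrow> y = x \<or> y = comp x"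
  by (cases x; cases y) auto

lemma image_comp_Int: "comp ` (C \<inter> comp ` D) = D \<inter> comp ` C"
  by (force intro: image_eqI[where x = "comp _"])

lemma exists_assignment_making_true:
  "\<exists>\<psi>. lit_true \<psi> x \<and> (\<forall>z. var_lit z \<noteq> var_lit x \<longrightarrow> lit_true \<psi> z = lit_true \<phi> z)"
proof (intro exI conjI allI impI)
  let ?\<psi> = "\<phi>(var_lit x := x = Pos (var_lit x))"
  show "lit_true ?\<psi> x" by (cases x) auto
  show "lit_true ?\<psi> z = lit_true \<phi> z" if "var_lit z \<noteq> var_lit x" for z
    using that by (cases z) auto
qed

lemma satisfiable_by_flipping:
  assumes only_C0: "\<forall>E\<in>F. l \<in> E \<longrightarrow> E = C0"
    and "comp l \<in> D"
    and \<phi>: "\<forall>E\<in>F - {D}. \<exists>z\<in>E. lit_true \<phi> z"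
    and y: "y \<in> C0" "var_lit y \<noteq> var_lit l" "lit_true \<phi> y"
  shows "satisfiable F"
proof -
  obtain \<psi> where \<psi>: "lit_true \<psi> (comp l)"
    and same: "\<And>z. var_lit z \<noteq> var_lit l \<Longrightarrow> lit_true \<psi> z = lit_true \<phi> z"
    using exists_assignment_making_true[of "comp l" \<phi>] by auto
  have "\<exists>z\<in>E. lit_true \<psi> z" if "E \<in> F" for E
  proof (cases "E = D")
    case True
    with \<open>comp l \<in> D\<close> \<psi> show ?thesis by blast
  next
    case False
    with \<phi> \<open>E \<in> F\<close> obtain z where z: "z \<in> E" "lit_true \<phi> z" by blast
    consider "var_lit z \<noteq> var_lit l" | "z = l" | "z = comp l"
      using var_lit_eq_iff by blast
    then show ?thesis
    proof cases
      case 1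
      with z same show ?thesis by blast
    next
      case 2
      with only_C0 \<open>E \<in> F\<close> z have "E = C0" by blast
      with y same show ?thesis by blast
    next
      case 3
      with z \<psi> show ?thesis by blast
    qed
  qed
  then show ?thesis
    unfolding satisfiable_def by blast
qed

text \<open>If some \<open>y \<in> C0 - {l}\<close> were missing from \<open>D\<close>, minimality (when \<open>comp y \<in> D\<close>) or
  saturation (adding \<open>y\<close> to \<open>D\<close>) yields an assignment satisfying \<open>F - {D}\<close> and making \<open>y\<close>
  true; flipping \<open>l\<close> to false then satisfies all of \<open>F\<close>, since \<open>C0\<close> is the only clause
  relying on \<open>l\<close>.\<close>

lemma saturated_singular_absorbs:
  assumes sat: "saturated F"
    and only_C0: "\<forall>E\<in>F. l \<in> E \<longrightarrow> E = C0"
    and C0: "C0 \<in> F" "l \<in> C0"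
    and D: "D \<in> F" "comp l \<in> D"
  shows "C0 - {l} \<subseteq> D"
proof
  fix y assume y: "y \<in> C0 - {l}"
  show "y \<in> D"
  proof (rule ccontr)
    assume "y \<notin> D"
    have mu: "min_unsat F"
      using sat unfolding saturated_def by blast
    then have unsat: "\<not> satisfiable F" and "clause C0"
      using C0 unfolding min_unsat_def clause_set_def by auto
    with y C0 have var_y: "var_lit y \<noteq> var_lit l"
      unfolding clause_def by (auto simp: var_lit_eq_iff)
    have D_false: "\<not> (\<exists>z\<in>D. lit_true \<phi> z)"
      if "\<forall>E\<in>F - {D}. \<exists>z\<in>E. lit_true \<phi> z" for \<phi>
      using that unsat unfolding satisfiable_def by blast
    obtain \<phi> where \<phi>: "\<forall>E\<in>F - {D}. \<exists>z\<in>E. lit_true \<phi> z" and "lit_true \<phi> y"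
    proof (cases "comp y \<in> D")
      case True
      from mu D obtain \<phi> where \<phi>: "\<forall>E\<in>F - {D}. \<exists>z\<in>E. lit_true \<phi> z"
        unfolding min_unsat_def satisfiable_def by blast
      with D_false[OF \<phi>] True show ?thesis
        using that by auto
    next
      case False
      with \<open>y \<notin> D\<close> have "var_lit y \<notin> vars_cl D"
        unfolding vars_cl_def by (auto simp: var_lit_eq_iff)
      moreover have "var_lit y \<in> vars F"
        using C0 y unfolding vars_def vars_cl_def by blast
      ultimately have "satisfiable ((F - {D}) \<union> {D \<union> {y}})"
        using sat D unfolding saturated_def by blast
      then obtain \<phi> where \<phi>: "\<forall>E\<in>(F - {D}) \<union> {D \<union> {y}}. \<exists>z\<in>E. lit_true \<phi> z"
        unfolding satisfiable_def by blast
      then have "\<forall>E\<in>F - {D}. \<exists>z\<in>E. lit_true \<phi> z"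
        by blast
      with D_false[OF this] \<phi> show ?thesis
        using that by auto
    qed
    with satisfiable_by_flipping[OF only_C0 D(2)] y var_y unsat show False
      by blast
  qed
qed

text \<open>The side condition \<open>C \<inter> comp ` D = {Pos v}\<close> in the definition of \<open>DP\<close> singles out
  \<open>Pos v\<close>; swapping the two parent clauses shows that either literal of \<open>v\<close> may be used.\<close>

lemma DP_eq_resolvents_on:
  assumes "var_lit l = v"
  shows "DP v F = {C \<in> F. v \<notin> vars_cl C} \<union>
    {(C \<union> D) - {l, comp l} | C D. C \<in> F \<and> D \<in> F \<and> C \<inter> comp ` D = {l}}"
proof (cases l)
  case (Pos u)
  with assms show ?thesis
    unfolding DP_def by simp
next
  case (Neg u)
  have swap: "C \<inter> comp ` D = {Pos v} \<longleftrightarrow> D \<inter> comp ` C = {Neg v}" for C D :: "'a lit set"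
    by (metis image_comp_Int comp.simps image_empty image_insert)
  from Neg assms show ?thesis
    unfolding DP_def swap by (auto simp: insert_commute Un_commute)
qed

lemma resolvent_absorbed:
  assumes "clause D" and "l \<in> C" "comp l \<in> D" and "C - {l} \<subseteq> D"
  shows "C \<inter> comp ` D = {l}" and "(C \<union> D) - {l, comp l} = D - {comp l}"
proof -
  have "l \<notin> D" and no_comp: "\<And>z. z \<in> D \<Longrightarrow> comp z \<notin> D"
    using assms(1,3) unfolding clause_def by (metis comp_comp)+
  have "l \<in> comp ` D"
    using \<open>comp l \<in> D\<close> by (force intro: image_eqI[where x = "comp l"])
  with assms no_comp show "C \<inter> comp ` D = {l}"
    by fastforce
  from assms \<open>l \<notin> D\<close> show "(C \<union> D) - {l, comp l} = D - {comp l}"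
    by blast
qed

lemma DP_singular:
  assumes sat: "saturated F" and "var_lit l = v" and C0: "{C \<in> F. l \<in> C} = {C0}"
  shows "DP v F = {C \<in> F. v \<notin> vars_cl C} \<union> (\<lambda>D. D - {comp l}) ` {D \<in> F. comp l \<in> D}"
proof -
  have "C0 \<in> F" "l \<in> C0" and only_C0: "\<forall>E\<in>F. l \<in> E \<longrightarrow> E = C0"
    using C0 by auto
  have absorbed: "C0 \<inter> comp ` D = {l}" "(C0 \<union> D) - {l, comp l} = D - {comp l}"
    if "D \<in> F" "comp l \<in> D" for D
  proof -
    have "clause D"
      using sat \<open>D \<in> F\<close> unfolding saturated_def min_unsat_def clause_set_def by blast
    moreover have "C0 - {l} \<subseteq> D"
      using saturated_singular_absorbs[OF sat only_C0 \<open>C0 \<in> F\<close> \<open>l \<in> C0\<close> that] .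
    ultimately show "C0 \<inter> comp ` D = {l}" "(C0 \<union> D) - {l, comp l} = D - {comp l}"
      using resolvent_absorbed \<open>l \<in> C0\<close> \<open>comp l \<in> D\<close> by simp_all
  qed
  have resolvents: "{(C \<union> D) - {l, comp l} | C D. C \<in> F \<and> D \<in> F \<and> C \<inter> comp ` D = {l}}
      = (\<lambda>D. D - {comp l}) ` {D \<in> F. comp l \<in> D}" (is "?R = ?I")
  proof
    show "?R \<subseteq> ?I"
    proof
      fix E assume "E \<in> ?R"
      then obtain C D where CD: "C \<in> F" "D \<in> F" "C \<inter> comp ` D = {l}"
        and E: "E = (C \<union> D) - {l, comp l}" by blast
      then have "l \<in> C" "l \<in> comp ` D"
        by auto
      then have "C = C0" and "comp l \<in> D"
        using only_C0 \<open>C \<in> F\<close> by (auto simp: image_iff)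
      then have "E = D - {comp l}"
        using E absorbed(2)[OF \<open>D \<in> F\<close>] by simp
      with \<open>D \<in> F\<close> \<open>comp l \<in> D\<close> show "E \<in> ?I"
        by simp
    qed
    show "?I \<subseteq> ?R"
    proof
      fix E assume "E \<in> ?I"
      then obtain D where D: "D \<in> F" "comp l \<in> D" and "E = D - {comp l}"
        by auto
      then have "E = (C0 \<union> D) - {l, comp l}"
        using absorbed(2)[OF D] by simp
      with \<open>C0 \<in> F\<close> D absorbed(1)[OF D] show "E \<in> ?R"
        by blast
    qed
  qed
  show ?thesis
    unfolding DP_eq_resolvents_on[OF \<open>var_lit l = v\<close>] resolvents ..
qed

lemma finite_DP: "finite F \<Longrightarrow> finite (DP v F)"
proof -
  assume "finite F"
  have "DP v F \<subseteq> F \<union> (\<lambda>(C, D). (C \<union> D) - {Pos v, Neg v}) ` (F \<times> F)"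
    unfolding DP_def by fastforce
  with \<open>finite F\<close> show ?thesis
    by (meson finite_SigmaI finite_UnI finite_imageI finite_subset)
qed

lemma saturated_finite: "saturated F \<Longrightarrow> finite F"
  unfolding saturated_def min_unsat_def clause_set_def by blast

lemma ldeg_pos_iff: "finite F \<Longrightarrow> 0 < ldeg F x \<longleftrightarrow> (\<exists>C\<in>F. x \<in> C)"
  unfolding ldeg_def by (auto simp: card_gt_0_iff)

lemma singularE:
  assumes "singular F v"
  obtains l where "var_lit l = v" "ldeg F l = 1" "0 < ldeg F (comp l)"
proof (cases "ldeg F (Pos v) = 1")
  case True
  with assms show ?thesis
    using that[of "Pos v"] unfolding singular_def by (auto simp: min_def split: if_splits)
next
  case False
  with assms show ?thesis
    using that[of "Neg v"] unfolding singular_def by (auto simp: min_def split: if_splits)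
qed

lemma ldeg_one_singleton:
  assumes "ldeg F l = 1"
  obtains C0 where "{C \<in> F. l \<in> C} = {C0}"
  using assms unfolding ldeg_def by (rule card_1_singletonE)

lemma ldeg_DP_singular_le:
  assumes sat: "saturated F" and "var_lit l = v" and "ldeg F l = 1"
  shows "ldeg (DP v F) x \<le> ldeg F x"
proof -
  obtain C0 where C0: "{C \<in> F. l \<in> C} = {C0}"
    using \<open>ldeg F l = 1\<close> by (rule ldeg_one_singleton)
  have "finite F"
    using sat by (rule saturated_finite)
  define A where "A = {C \<in> F. v \<notin> vars_cl C \<and> x \<in> C}"
  define B where "B = {D \<in> F. comp l \<in> D \<and> x \<in> D}"
  have fin: "finite A" "finite B"
    using \<open>finite F\<close> unfolding A_def B_def by auto
  have "A \<inter> B = {}"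
    using \<open>var_lit l = v\<close> unfolding A_def B_def vars_cl_def by (fastforce dest: imageI[of _ _ var_lit])
  have "{E \<in> DP v F. x \<in> E} \<subseteq> A \<union> (\<lambda>D. D - {comp l}) ` B"
    unfolding DP_singular[OF sat \<open>var_lit l = v\<close> C0] A_def B_def by auto
  then have "ldeg (DP v F) x \<le> card (A \<union> (\<lambda>D. D - {comp l}) ` B)"
    unfolding ldeg_def using fin by (intro card_mono) auto
  also have "\<dots> \<le> card A + card B"
    using card_Un_le card_image_le[OF fin(2)] by (meson add_left_mono order_trans)
  also have "\<dots> = card (A \<union> B)"
    using card_Un_disjoint[OF fin \<open>A \<inter> B = {}\<close>] by simp
  also have "\<dots> \<le> ldeg F x"
    unfolding ldeg_def A_def B_def using \<open>finite F\<close> by (intro card_mono) auto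
  finally show ?thesis .
qed

lemma ldeg_DP_singular_pos:
  assumes sat: "saturated F" and "var_lit l = v" and "ldeg F l = 1" and "0 < ldeg F (comp l)"
    and "var_lit x \<noteq> v" and "0 < ldeg F x"
  shows "0 < ldeg (DP v F) x"
proof -
  obtain C0 where C0: "{C \<in> F. l \<in> C} = {C0}"
    using \<open>ldeg F l = 1\<close> by (rule ldeg_one_singleton)
  then have "C0 \<in> F" "l \<in> C0" and only_C0: "\<forall>E\<in>F. l \<in> E \<longrightarrow> E = C0"
    by auto
  have "finite F"
    using sat by (rule saturated_finite)
  note DP = DP_singular[OF sat \<open>var_lit l = v\<close> C0]
  have x_ne: "x \<noteq> l" "x \<noteq> comp l"
    using \<open>var_lit x \<noteq> v\<close> \<open>var_lit l = v\<close> by auto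
  obtain C where "C \<in> F" "x \<in> C"
    using \<open>0 < ldeg F x\<close> ldeg_pos_iff[OF \<open>finite F\<close>] by blast
  obtain D0 where "D0 \<in> F" "comp l \<in> D0"
    using \<open>0 < ldeg F (comp l)\<close> ldeg_pos_iff[OF \<open>finite F\<close>] by blast
  have "\<exists>E\<in>DP v F. x \<in> E"
  proof (cases "v \<in> vars_cl C")
    case False
    with \<open>C \<in> F\<close> \<open>x \<in> C\<close> show ?thesis
      unfolding DP by blast
  next
    case True
    then consider "l \<in> C" | "comp l \<in> C"
      using \<open>var_lit l = v\<close> unfolding vars_cl_def by (auto simp: var_lit_eq_iff)
    then show ?thesis
    proof cases
      case 1
      with only_C0 \<open>C \<in> F\<close> have "C = C0"
        by blast
      with \<open>x \<in> C\<close> x_ne have "x \<in> C0 - {l}"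
        by simp
      then have "x \<in> D0 - {comp l}"
        using saturated_singular_absorbs[OF sat only_C0 \<open>C0 \<in> F\<close> \<open>l \<in> C0\<close> \<open>D0 \<in> F\<close> \<open>comp l \<in> D0\<close>] x_ne
        by blast
      moreover have "D0 - {comp l} \<in> DP v F"
        unfolding DP using \<open>D0 \<in> F\<close> \<open>comp l \<in> D0\<close> by (intro UnI2 image_eqI[where x = D0]) simp_all
      ultimately show ?thesis
        by (rule bexI)
    next
      case 2
      with \<open>C \<in> F\<close> have "C - {comp l} \<in> DP v F"
        unfolding DP by (intro UnI2 image_eqI[where x = C]) simp_all
      moreover have "x \<in> C - {comp l}"
        using \<open>x \<in> C\<close> x_ne by simp
      ultimately show ?thesis
        by (rule bexI[rotated])
    qed
  qed
  with ldeg_pos_iff[OF finite_DP[OF \<open>finite F\<close>]] show ?thesis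
    by blast
qed

theorem corollary26:
  fixes F :: "'v lit set set" and v :: 'v
  assumes "saturated F" and "singular F v"
  shows "(\<forall>x. ldeg (DP v F) x \<le> ldeg F x) \<and>
         (\<forall>w. w \<noteq> v \<and> singular F w \<longrightarrow> singular (DP v F) w)"
proof -
  obtain l where l: "var_lit l = v" "ldeg F l = 1" "0 < ldeg F (comp l)"
    using \<open>singular F v\<close> by (rule singularE)
  have le: "ldeg (DP v F) x \<le> ldeg F x" for x
    using ldeg_DP_singular_le[OF \<open>saturated F\<close> l(1,2)] .
  have "singular (DP v F) w" if "w \<noteq> v" "singular F w" for w
  proof -
    have "0 < ldeg F (Pos w)" "0 < ldeg F (Neg w)"
      using \<open>singular F w\<close> unfolding singular_def by linarith+
    then have "0 < ldeg (DP v F) (Pos w)" "0 < ldeg (DP v F) (Neg w)"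
      using ldeg_DP_singular_pos[OF \<open>saturated F\<close> l] \<open>w \<noteq> v\<close> by simp_all
    with le[of "Pos w"] le[of "Neg w"] \<open>singular F w\<close> show ?thesis
      unfolding singular_def by linarith
  qed
  with le show ?thesis
    by blast
qed

end
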